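(* There is no $\mathcal{R}$-commutative T2R semigroup.
   Context: A semigroup $S$ is $\mathcal{R}$-commutative if for every $s,t\in S$ there is an element $r\in S^1$ (where $S^1$ is $S$ with an identity adjoined) such that $st=tsr$. A semigroup $S$ is a $\Delta$-semigroup if the lattice of all congruences of $S$ is a chain with respect to inclusion. A semigroup $N$ with zero $0$ is nil if every element has some power equal to $0$; non-trivial means having more than one element. A T2R semigroup is a $\Delta$-semigroup $S$ which is the disjoint union of a non-trivial nil ideal $S_0$ (with zero $0$, which is then the zero of $S$) and a subsemigroup $S_1=\{u,v\}$, $u\neq v$, which is a right zero semigroup ($xy=y$ for $x,y\in S_1$). *)

theory Defs
  imports Main
begin

definition semigroup_on :: "'a set \<Rightarrow> ('a \<Rightarrow> 'a \<Rightarrow> 'a) \<Rightarrow> bool" where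
  "semigroup_on S f \<longleftrightarrow> (\<forall>x\<in>S. \<forall>y\<in>S. f x y \<in> S) \<and>
     (\<forall>x\<in>S. \<forall>y\<in>S. \<forall>z\<in>S. f (f x y) z = f x (f y z))"

text \<open>R-commutative: for all s t there is r in S^1 with st = tsr (r = 1 gives st = ts).\<close>
definition R_commutative :: "'a set \<Rightarrow> ('a \<Rightarrow> 'a \<Rightarrow> 'a) \<Rightarrow> bool" where
  "R_commutative S f \<longleftrightarrow> (\<forall>s\<in>S. \<forall>t\<in>S. f s t = f t s \<or> (\<exists>r\<in>S. f s t = f (f t s) r))"

definition congruence_on :: "'a set \<Rightarrow> ('a \<Rightarrow> 'a \<Rightarrow> 'a) \<Rightarrow> ('a \<times> 'a) set \<Rightarrow> bool" where
  "congruence_on S f \<rho> \<longleftrightarrow> equiv S \<rho> \<and>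
     (\<forall>a b c. (a, b) \<in> \<rho> \<longrightarrow> c \<in> S \<longrightarrow> (f c a, f c b) \<in> \<rho> \<and> (f a c, f b c) \<in> \<rho>)"

definition Delta_semigroup :: "'a set \<Rightarrow> ('a \<Rightarrow> 'a \<Rightarrow> 'a) \<Rightarrow> bool" where
  "Delta_semigroup S f \<longleftrightarrow> semigroup_on S f \<and>
     (\<forall>\<rho> \<sigma>. congruence_on S f \<rho> \<longrightarrow> congruence_on S f \<sigma> \<longrightarrow> \<rho> \<subseteq> \<sigma> \<or> \<sigma> \<subseteq> \<rho>)"

text \<open>spow f x n = x^(n+1).\<close>
primrec spow :: "('a \<Rightarrow> 'a \<Rightarrow> 'a) \<Rightarrow> 'a \<Rightarrow> nat \<Rightarrow> 'a" where
  "spow f x 0 = x"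
| "spow f x (Suc n) = f (spow f x n) x"

definition ideal_of :: "'a set \<Rightarrow> ('a \<Rightarrow> 'a \<Rightarrow> 'a) \<Rightarrow> 'a set \<Rightarrow> bool" where
  "ideal_of S f I \<longleftrightarrow> I \<noteq> {} \<and> I \<subseteq> S \<and> (\<forall>x\<in>I. \<forall>y\<in>S. f x y \<in> I \<and> f y x \<in> I)"

definition nil_with_zero :: "'a set \<Rightarrow> ('a \<Rightarrow> 'a \<Rightarrow> 'a) \<Rightarrow> 'a \<Rightarrow> bool" where
  "nil_with_zero N f z \<longleftrightarrow> z \<in> N \<and> (\<forall>x\<in>N. f z x = z \<and> f x z = z) \<and>
     (\<forall>x\<in>N. \<exists>n. spow f x n = z)"

definition T2R :: "'a set \<Rightarrow> ('a \<Rightarrow> 'a \<Rightarrow> 'a) \<Rightarrow> bool" where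
  "T2R S f \<longleftrightarrow> Delta_semigroup S f \<and>
     (\<exists>S0 z u v. S = S0 \<union> {u, v} \<and> S0 \<inter> {u, v} = {} \<and> u \<noteq> v \<and>
        ideal_of S f S0 \<and> nil_with_zero S0 f z \<and> (\<exists>x\<in>S0. x \<noteq> z) \<and>
        (\<forall>x\<in>{u, v}. \<forall>y\<in>{u, v}. f x y = y))"

end

theory Submission
  imports Defs
begin

(* Let S = S0 \<union> {u, v} be a T2R semigroup with zero z and suppose it is
   R-commutative.  We compare two congruences of S:
   - the Rees congruence of the ideal S0, which identifies all of S0 but not u with v;
   - the syntactic congruence of {z}, identifying x and y when s x t = z \<longleftrightarrow> s y t = z
     for all s, t in S^1; it never identifies z with another element.
   R-commutativity together with v u = u shows that u q lies in (v q) S^1 for every q in S^1,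
   and symmetrically with u and v exchanged; since z is a left zero this forces u and v to be
   syntactically equivalent.  Hence neither congruence contains the other, contradicting the
   Delta property. *)

text \<open>Multiplication of S extended to S^1, with None playing the adjoined identity.\<close>
fun mult1 :: "('a \<Rightarrow> 'a \<Rightarrow> 'a) \<Rightarrow> 'a option \<Rightarrow> 'a option \<Rightarrow> 'a option" where
  "mult1 f None y = y"
| "mult1 f (Some a) None = Some a"
| "mult1 f (Some a) (Some b) = Some (f a b)"

definition carrier1 :: "'a set \<Rightarrow> 'a option set" where
  "carrier1 S = insert None (Some ` S)"

lemma mult1_None_right [simp]: "mult1 f x None = x"
  by (cases x) simp_all

lemma carrier1_iff [simp]: "Some a \<in> carrier1 S \<longleftrightarrow> a \<in> S" "None \<in> carrier1 S"
  unfolding carrier1_def by auto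

lemma carrier1_cases:
  assumes "x \<in> carrier1 S"
  obtains "x = None" | a where "x = Some a" "a \<in> S"
  using assms unfolding carrier1_def by auto

lemma mult1_closed:
  assumes "semigroup_on S f" "x \<in> carrier1 S" "y \<in> carrier1 S"
  shows "mult1 f x y \<in> carrier1 S"
  using assms unfolding carrier1_def semigroup_on_def by auto

lemma mult1_assoc:
  assumes "semigroup_on S f" "x \<in> carrier1 S" "y \<in> carrier1 S" "w \<in> carrier1 S"
  shows "mult1 f (mult1 f x y) w = mult1 f x (mult1 f y w)"
  using assms unfolding carrier1_def semigroup_on_def by auto

definition syntactic_cong :: "'a set \<Rightarrow> ('a \<Rightarrow> 'a \<Rightarrow> 'a) \<Rightarrow> 'a set \<Rightarrow> ('a \<times> 'a) set" where
  "syntactic_cong S f Z = {(x, y). x \<in> S \<and> y \<in> S \<and>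
     (\<forall>s\<in>carrier1 S. \<forall>t\<in>carrier1 S.
        mult1 f (mult1 f s (Some x)) t \<in> Some ` Z \<longleftrightarrow> mult1 f (mult1 f s (Some y)) t \<in> Some ` Z)}"

lemma syntactic_cong_is_congruence:
  assumes sg: "semigroup_on S f"
  shows "congruence_on S f (syntactic_cong S f Z)"
  unfolding congruence_on_def
proof (intro conjI allI impI)
  show "equiv S (syntactic_cong S f Z)"
    unfolding equiv_def refl_on_def sym_def trans_def syntactic_cong_def by auto
next
  fix x y c assume xy: "(x, y) \<in> syntactic_cong S f Z" and c: "c \<in> S"
  have x: "x \<in> S" and y: "y \<in> S" and cl: "\<And>a b. a \<in> S \<Longrightarrow> b \<in> S \<Longrightarrow> f a b \<in> S"
    using xy sg unfolding syntactic_cong_def semigroup_on_def by auto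
  note ctx = xy[unfolded syntactic_cong_def, simplified, THEN conjunct2, THEN conjunct2, rule_format]
  text \<open>Multiplying by c on the left moves c into the left context, on the right into the right one.\<close>
  have left: "mult1 f (mult1 f s (Some (f c a))) t = mult1 f (mult1 f (mult1 f s (Some c)) (Some a)) t"
    if "s \<in> carrier1 S" "a \<in> S" for s t a
    using mult1_assoc[OF sg that(1), of "Some c" "Some a"] c that by simp
  have right: "mult1 f (mult1 f s (Some (f a c))) t = mult1 f (mult1 f s (Some a)) (mult1 f (Some c) t)"
    if "s \<in> carrier1 S" "t \<in> carrier1 S" "a \<in> S" for s t a
    using mult1_assoc[OF sg mult1_closed[OF sg that(1), of "Some a"], of "Some c" t]
      mult1_assoc[OF sg that(1), of "Some a" "Some c"] c that by simp
  show "(f c x, f c y) \<in> syntactic_cong S f Z"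
    unfolding syntactic_cong_def
    using x y c cl ctx[OF mult1_closed[OF sg], of _ "Some c"] by (auto simp: left)
  show "(f x c, f y c) \<in> syntactic_cong S f Z"
    unfolding syntactic_cong_def
    using x y c cl ctx[OF _ mult1_closed[OF sg], of _ "Some c"] by (auto simp: right)
qed

definition rees_cong :: "'a set \<Rightarrow> 'a set \<Rightarrow> ('a \<times> 'a) set" where
  "rees_cong S I = I \<times> I \<union> Id_on S"

lemma rees_cong_is_congruence:
  assumes "semigroup_on S f" "ideal_of S f I"
  shows "congruence_on S f (rees_cong S I)"
  using assms unfolding congruence_on_def equiv_def refl_on_def sym_def trans_def
    rees_cong_def ideal_of_def semigroup_on_def by blast

text \<open>x \<in> y S^1, the preorder underlying Green's relation R.\<close>
definition right_multiple :: "'a set \<Rightarrow> ('a \<Rightarrow> 'a \<Rightarrow> 'a) \<Rightarrow> 'a option \<Rightarrow> 'a option \<Rightarrow> bool" where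
  "right_multiple S f x y \<longleftrightarrow> (\<exists>r\<in>carrier1 S. x = mult1 f y r)"

lemma right_multiple_trans:
  assumes sg: "semigroup_on S f" and w: "w \<in> carrier1 S"
    and "right_multiple S f x y" "right_multiple S f y w"
  shows "right_multiple S f x w"
proof -
  obtain r r' where r: "r \<in> carrier1 S" "x = mult1 f y r"
    and r': "r' \<in> carrier1 S" "y = mult1 f w r'"
    using assms(3,4) unfolding right_multiple_def by blast
  have "x = mult1 f w (mult1 f r' r)"
    using r r' w mult1_assoc[OF sg] by simp
  then show ?thesis
    unfolding right_multiple_def using mult1_closed[OF sg r'(1) r(1)] by blast
qed

lemma right_multiple_mult:
  assumes sg: "semigroup_on S f" "x \<in> carrier1 S" "y \<in> carrier1 S" "r \<in> carrier1 S"
    and "right_multiple S f x y"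
  shows "right_multiple S f (mult1 f x r) y"
  using assms mult1_assoc[OF sg(1)] mult1_closed[OF sg(1)]
  unfolding right_multiple_def by metis

lemma R_commutative_right_multiple:
  assumes "R_commutative S f" "s \<in> S" "t \<in> S"
  shows "right_multiple S f (Some (f s t)) (Some (f t s))"
  using assms unfolding R_commutative_def right_multiple_def carrier1_def
  by (force intro: bexI[of _ None])

text \<open>The key step: if v u = u in an R-commutative semigroup, then u q \<in> (v q) S^1 for all
  q \<in> S^1.  For q \<in> S: u q \<in> (q u) S^1, q u = (q v) u and q v \<in> (v q) S^1.\<close>
lemma R_commutative_shifted_right_multiple:
  assumes sg: "semigroup_on S f" and rc: "R_commutative S f"
    and u: "u \<in> S" and v: "v \<in> S" and vu: "f v u = u" and q: "q \<in> carrier1 S"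
  shows "right_multiple S f (mult1 f (Some u) q) (mult1 f (Some v) q)"
  using q
proof (cases rule: carrier1_cases)
  case 1
  then show ?thesis
    using u vu unfolding right_multiple_def by (force intro: bexI[of _ "Some u"])
next
  case (2 a)
  have cl: "\<And>x y. x \<in> S \<Longrightarrow> y \<in> S \<Longrightarrow> f x y \<in> S"
    and assoc: "\<And>x y w. x \<in> S \<Longrightarrow> y \<in> S \<Longrightarrow> w \<in> S \<Longrightarrow> f (f x y) w = f x (f y w)"
    using sg unfolding semigroup_on_def by blast+
  have "Some (f a u) = mult1 f (Some (f a v)) (Some u)"
    using assoc[of a v u] 2(2) u v vu by simp
  moreover have "right_multiple S f (mult1 f (Some (f a v)) (Some u)) (Some (f v a))"
    using right_multiple_mult[OF sg _ _ _ R_commutative_right_multiple[OF rc 2(2) v],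
        of "Some u"] 2(2) u v cl by simp
  ultimately have "right_multiple S f (Some (f a u)) (Some (f v a))"
    by simp
  then show ?thesis
    using right_multiple_trans[OF sg _ R_commutative_right_multiple[OF rc u 2(2)]]
      2 u v cl by simp
qed

lemma right_multiples_reflect_syntactic:
  assumes sg: "semigroup_on S f" and Z: "\<And>a r. a \<in> Z \<Longrightarrow> r \<in> S \<Longrightarrow> f a r \<in> Z"
    and x: "x \<in> S" and y: "y \<in> S"
    and xy: "\<And>t. t \<in> carrier1 S \<Longrightarrow> right_multiple S f (mult1 f (Some x) t) (mult1 f (Some y) t)"
    and s: "s \<in> carrier1 S" and t: "t \<in> carrier1 S"
    and yZ: "mult1 f (mult1 f s (Some y)) t \<in> Some ` Z"
  shows "mult1 f (mult1 f s (Some x)) t \<in> Some ` Z"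
proof -
  obtain r where r: "r \<in> carrier1 S" "mult1 f (Some x) t = mult1 f (mult1 f (Some y) t) r"
    using xy[OF t] unfolding right_multiple_def by blast
  have "mult1 f (mult1 f s (Some x)) t = mult1 f (mult1 f (mult1 f s (Some y)) t) r"
    using r s t x y by (simp add: mult1_assoc[OF sg] mult1_closed[OF sg])
  moreover obtain a where "a \<in> Z" "mult1 f (mult1 f s (Some y)) t = Some a"
    using yZ by blast
  moreover have "mult1 f (Some a) r \<in> Some ` Z" if "a \<in> Z" for a
    using r(1) Z[OF that] that by (cases rule: carrier1_cases) auto
  ultimately show ?thesis by simp
qed

lemma R_commutative_syntactic_equivalent:
  assumes sg: "semigroup_on S f" and rc: "R_commutative S f"
    and Z: "\<And>a r. a \<in> Z \<Longrightarrow> r \<in> S \<Longrightarrow> f a r \<in> Z"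
    and u: "u \<in> S" and v: "v \<in> S" and uv: "f u v = v" and vu: "f v u = u"
  shows "(u, v) \<in> syntactic_cong S f Z"
  unfolding syntactic_cong_def
  using right_multiples_reflect_syntactic[OF sg Z u v
      R_commutative_shifted_right_multiple[OF sg rc u v vu]]
    right_multiples_reflect_syntactic[OF sg Z v u
      R_commutative_shifted_right_multiple[OF sg rc v u uv]]
    u v by blast

lemma ideal_zero_left_zero:
  assumes sg: "semigroup_on S f" and I: "ideal_of S f I" and z: "nil_with_zero I f z"
    and y: "y \<in> S"
  shows "f z y = z"
proof -
  have zI: "z \<in> I" and zz: "\<And>x. x \<in> I \<Longrightarrow> f z x = z"
    using z unfolding nil_with_zero_def by blast+
  have zy: "f z y \<in> I" and zS: "z \<in> S" using I zI y unfolding ideal_of_def by blast+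
  have "f z y = f (f z z) y" using zz[OF zI] by simp
  also have "\<dots> = f z (f z y)" using sg zS y unfolding semigroup_on_def by blast
  also have "\<dots> = z" using zz[OF zy] .
  finally show ?thesis .
qed

theorem mainTheorem9:
  fixes S :: "'a set" and f :: "'a \<Rightarrow> 'a \<Rightarrow> 'a"
  shows "\<not> (T2R S f \<and> R_commutative S f)"
proof
  assume "T2R S f \<and> R_commutative S f"
  then obtain S0 z u v where D: "Delta_semigroup S f" and rc: "R_commutative S f"
    and S: "S = S0 \<union> {u, v}" "S0 \<inter> {u, v} = {}" "u \<noteq> v"
    and S0: "ideal_of S f S0" "nil_with_zero S0 f z" and nontrivial: "\<exists>x\<in>S0. x \<noteq> z"
    and uv: "\<forall>x\<in>{u, v}. \<forall>y\<in>{u, v}. f x y = y"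
    unfolding T2R_def by blast
  have sg: "semigroup_on S f" using D unfolding Delta_semigroup_def by blast
  let ?\<sigma> = "syntactic_cong S f {z}" and ?\<rho> = "rees_cong S S0"
  obtain x where x: "x \<in> S0" "x \<noteq> z" using nontrivial by blast
  have "(u, v) \<in> ?\<sigma>"
    using R_commutative_syntactic_equivalent[OF sg rc, of "{z}"] ideal_zero_left_zero[OF sg S0]
      S uv by auto
  moreover have "(u, v) \<notin> ?\<rho>" using S unfolding rees_cong_def by auto
  moreover have "(x, z) \<in> ?\<rho>" "(x, z) \<notin> ?\<sigma>"
    using x S0(2) unfolding rees_cong_def syntactic_cong_def nil_with_zero_def
    by (auto intro!: bexI[of _ None])
  ultimately show False
    using D syntactic_cong_is_congruence[OF sg] rees_cong_is_congruence[OF sg S0(1)]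
    unfolding Delta_semigroup_def by blast
qed

end
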